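(* Consider the fixed-share algorithm with time-varying parameters, with $\eta_t=\sqrt{\ln(dt)/t}$ for $t\ge3$, $\eta_0=\eta_1=\eta_2=\eta_3$, and $\alpha_t=1/t$ for $t\ge1$. Then for all $T\ge3$ and all loss vectors $\ell_1,\dots,\ell_T\in[0,1]^d$, \[ \max_{1\le r\le s\le T}\Big\{\sum_{t=r}^s\hat p_t^\top\ell_t-\min_{q\in\Delta_d}\sum_{t=r}^sq^\top\ell_t\Big\}\le\sqrt{2T\ln(dT)}+\sqrt{3\ln(3d)}. \]
   Context: Let $d\ge1$ and $\Delta_d=\{q\in[0,1]^d:\sum_{i=1}^d q_i=1\}$. The fixed-share algorithm with time-varying parameters uses sequences $(\eta_t)_{t\ge1}$ of positive numbers and $(\alpha_t)_{t\ge1}$ in $(0,1]$, with the convention $\eta_0=\eta_1$. It sets $\hat p_1=(1/d,\dots,1/d)$; at each round $t\ge1$ it predicts $\hat p_t\in\Delta_d$, observes an arbitrary loss vector $\ell_t=(\ell_{1,t},\dots,\ell_{d,t})\in[0,1]^d$, suffers loss $\hat p_t^\top\ell_t$, and then sets, for $j=1,\dots,d$, $v_{j,t+1}=\hat p_{j,t}^{\,\eta_t/\eta_{t-1}}e^{-\eta_t\ell_{j,t}}\big/\sum_{i=1}^d\hat p_{i,t}^{\,\eta_t/\eta_{t-1}}e^{-\eta_t\ell_{i,t}}$ and $\hat p_{j,t+1}=\alpha_t/d+(1-\alpha_t)v_{j,t+1}$. (The maximum ranges over integers $r,s$.) *)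

theory Defs
  imports "HOL-Analysis.Analysis"
begin

text \<open>Experts are indexed by j < d, rounds by t \<ge> 1; the loss of expert j at round t is l t j.
  fixed_share d eta alpha l t j is the weight \<hat>p_{j,t} (defined for t \<ge> 1; t = 0 is a dummy).
  The convention eta_0 = eta_1 is built into the parameter sequence passed in.\<close>

fun fixed_share :: "nat \<Rightarrow> (nat \<Rightarrow> real) \<Rightarrow> (nat \<Rightarrow> real) \<Rightarrow> (nat \<Rightarrow> nat \<Rightarrow> real) \<Rightarrow> nat \<Rightarrow> nat \<Rightarrow> real"
where
  "fixed_share d eta alpha l 0 = (\<lambda>j. 1 / real d)"
| "fixed_share d eta alpha l (Suc 0) = (\<lambda>j. 1 / real d)"
| "fixed_share d eta alpha l (Suc (Suc t)) =
     (let p = fixed_share d eta alpha l (Suc t);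
          w = (\<lambda>j. p j powr (eta (Suc t) / eta t) * exp (- eta (Suc t) * l (Suc t) j));
          Z = (\<Sum>i<d. w i)
      in (\<lambda>j. alpha (Suc t) / real d + (1 - alpha (Suc t)) * (w j / Z)))"

definition prob_simplex :: "nat \<Rightarrow> (nat \<Rightarrow> real) set" where
  "prob_simplex d = {q. (\<forall>j<d. 0 \<le> q j \<and> q j \<le> 1) \<and> (\<Sum>j<d. q j) = 1}"

definition eta_thm :: "nat \<Rightarrow> nat \<Rightarrow> real" where
  "eta_thm d t = (if t \<le> 3 then sqrt (ln (real d * 3) / 3) else sqrt (ln (real d * real t) / real t))"

definition alpha_thm :: "nat \<Rightarrow> real" where
  "alpha_thm t = 1 / real t"

end

theory Submission
  imports Defs "HOL-Probability.Hoeffding"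
begin

(*
  Fix an expert k and the potential Phi_t = ln(d p_{k,t}) / eta_{t-1}.  One round of
  exponential weights whose learning rate drops from eta_{t-1} to eta_t is analysed with
  Hoeffding's lemma and the power-mean inequality; it gives an instantaneous regret of at
  most (ln(d v_{k,t+1}) / eta_t) - Phi_t + eta_{t-1}/8, where v is the weight vector
  before mixing.  Mixing with alpha_t loses at most ln(t/(t-1)) (ln d in round 1) when v
  is replaced by p_{t+1}.  Summing over an interval r..s telescopes; the initial potential
  is controlled by the floor p_{k,r} >= 1/(d(r-1)) provided by the shares, and the sum of
  learning rates by sum 1/sqrt t <= 2 sqrt T.  Finally a bound against every single expert
  is a bound against the whole simplex, because a linear function on the simplex is
  minimised at a vertex.
*)

(* It controls the normaliser when the
   learning rate decreases between rounds. *)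
lemma sum_powr_le_card_powr:
  fixes a :: "'a \<Rightarrow> real" and A :: "'a set" and \<rho> :: real
  assumes A: "finite A" "A \<noteq> {}" and a: "\<And>i. i \<in> A \<Longrightarrow> a i > 0"
    and \<rho>: "0 < \<rho>" "\<rho> \<le> 1"
  shows "(\<Sum>i\<in>A. a i powr \<rho>) \<le> (\<Sum>i\<in>A. a i) powr \<rho> * real (card A) powr (1 - \<rho>)"
proof -
  define S where "S = (\<Sum>i\<in>A. a i)"
  define n where "n = real (card A)"
  have S: "S > 0" unfolding S_def using A a by (intro sum_pos) auto
  have n: "n > 0" using A by (simp add: n_def card_gt_0_iff)
  have "(\<Sum>i\<in>A. a i powr \<rho>) / (S powr \<rho> * n powr (1 - \<rho>))
        = (\<Sum>i\<in>A. (a i / S) powr \<rho> * (1 / n) powr (1 - \<rho>))"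
    unfolding sum_divide_distrib using a S n by (intro sum.cong) (simp_all add: powr_divide)
  also have "\<dots> \<le> (\<Sum>i\<in>A. \<rho> * (a i / S) + (1 - \<rho>) * (1 / n))"
    using a S n \<rho> by (intro sum_mono Youngs_inequality_0) auto
  also have "\<dots> = 1"
    using S n by (simp add: sum.distrib sum_distrib_left[symmetric] sum_divide_distrib[symmetric]
                   flip: S_def n_def)
  finally show ?thesis
    using S n by (simp add: divide_le_eq S_def n_def)
qed

lemma exp_neg_le_chord:
  fixes \<eta> x :: real
  assumes "\<eta> \<ge> 0" "0 \<le> x" "x \<le> 1"
  shows "exp (- \<eta> * x) \<le> 1 - x * (1 - exp (- \<eta>))"
proof -
  have "exp (\<eta> * ((1 - x) *\<^sub>R 0 + x *\<^sub>R (-1))) \<le> (1 - x) * exp (\<eta> * 0) + x * exp (\<eta> * (-1))"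
    using convex_onD[OF convex_on_exp[OF assms(1)], of x 0 "-1"] assms by simp
  thus ?thesis by (simp add: algebra_simps)
qed

lemma hoeffding_finite:
  fixes p loss :: "'a \<Rightarrow> real" and A :: "'a set" and \<eta> :: real
  assumes A: "finite A" and p: "\<And>i. i \<in> A \<Longrightarrow> p i \<ge> 0" and p_sum: "(\<Sum>i\<in>A. p i) = 1"
    and loss: "\<And>i. i \<in> A \<Longrightarrow> 0 \<le> loss i \<and> loss i \<le> 1" and \<eta>: "\<eta> > 0"
  shows "ln (\<Sum>i\<in>A. p i * exp (- \<eta> * loss i)) \<le> - \<eta> * (\<Sum>i\<in>A. p i * loss i) + \<eta>\<^sup>2 / 8"
proof -
  define m where "m = (\<Sum>i\<in>A. p i * loss i)"
  have "m \<le> (\<Sum>i\<in>A. p i * 1)" unfolding m_def using p loss by (intro sum_mono mult_left_mono) auto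
  hence m1: "m \<le> 1" using p_sum by simp
  have "exp (- \<eta>) = (\<Sum>i\<in>A. p i * exp (- \<eta>))" using p_sum by (simp flip: sum_distrib_right)
  also have "\<dots> \<le> (\<Sum>i\<in>A. p i * exp (- \<eta> * loss i))"
    using p loss \<eta> by (intro sum_mono mult_left_mono) auto
  finally have pos: "(\<Sum>i\<in>A. p i * exp (- \<eta> * loss i)) > 0" by (meson exp_gt_zero order_less_le_trans)
  have "(\<Sum>i\<in>A. p i * exp (- \<eta> * loss i)) \<le> (\<Sum>i\<in>A. p i * (1 - loss i * (1 - exp (- \<eta>))))"
    using p loss \<eta> exp_neg_le_chord by (intro sum_mono mult_left_mono) auto
  also have "\<dots> = (\<Sum>i\<in>A. p i - (1 - exp (- \<eta>)) * (p i * loss i))"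
    by (simp add: algebra_simps)
  also have "\<dots> = exp (- \<eta>) * (1 + (1 - m) * (exp \<eta> - 1))"
    using p_sum by (simp add: sum_subtractf flip: sum_distrib_left m_def)
                   (simp add: exp_minus field_simps)
  finally have "ln (\<Sum>i\<in>A. p i * exp (- \<eta> * loss i)) \<le> ln (exp (- \<eta>) * (1 + (1 - m) * (exp \<eta> - 1)))"
    using pos by simp
  also have "\<dots> = - \<eta> + ln (1 + (1 - m) * (exp \<eta> - 1))"
  proof -
    have "(1 - m) * (exp \<eta> - 1) \<ge> 0" using m1 \<eta> by simp
    thus ?thesis by (subst ln_mult) auto
  qed
  also have "\<dots> \<le> - \<eta> * m + \<eta>\<^sup>2 / 8"
    using Hoeffdings_lemma_aux[of \<eta> "1 - m"] \<eta> m1 by (simp add: algebra_simps)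
  finally show ?thesis unfolding m_def .
qed

lemma exp_weights_round:
  fixes p loss :: "'a \<Rightarrow> real" and A :: "'a set" and k :: 'a and \<eta> \<eta>' :: real
  assumes A: "finite A" and k: "k \<in> A" and p: "\<And>i. i \<in> A \<Longrightarrow> p i > 0"
    and p_sum: "(\<Sum>i\<in>A. p i) = 1" and loss: "\<And>i. i \<in> A \<Longrightarrow> 0 \<le> loss i \<and> loss i \<le> 1"
    and \<eta>: "0 < \<eta>" "\<eta> \<le> \<eta>'"
  defines "w \<equiv> (\<lambda>j. p j powr (\<eta> / \<eta>') * exp (- \<eta> * loss j))"
  shows "(\<Sum>i\<in>A. p i * loss i) - loss k
         \<le> ln (card A * (w k / (\<Sum>i\<in>A. w i))) / \<eta> - ln (card A * p k) / \<eta>' + \<eta>' / 8"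
proof -
  define \<rho> where "\<rho> = \<eta> / \<eta>'"
  define n where "n = real (card A)"
  define m where "m = (\<Sum>i\<in>A. p i * loss i)"
  define a where "a = (\<lambda>i. p i * exp (- \<eta>' * loss i))"
  define S where "S = (\<Sum>i\<in>A. a i)"
  define Z where "Z = (\<Sum>i\<in>A. w i)"
  have \<eta>': "\<eta>' > 0" using \<eta> by simp
  have \<rho>: "0 < \<rho>" "\<rho> \<le> 1" "\<rho> * \<eta>' = \<eta>" using \<eta> \<eta>' by (auto simp: \<rho>_def)
  have ne: "A \<noteq> {}" using k by auto
  have n: "n > 0" using A ne by (simp add: n_def card_gt_0_iff)
  have a: "a i > 0" if "i \<in> A" for i using p[OF that] by (simp add: a_def)
  have w_eq: "w i = a i powr \<rho>" if "i \<in> A" for i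
  proof -
    have "exp (- \<eta>' * loss i) powr \<rho> = exp (- \<eta> * loss i)"
      using \<rho>(3) by (simp add: powr_def algebra_simps)
    thus ?thesis using p[OF that] by (simp add: w_def a_def \<rho>_def powr_mult)
  qed
  have w: "w i > 0" if "i \<in> A" for i using w_eq[OF that] a[OF that] by simp
  have S: "S > 0" unfolding S_def using A ne a by (intro sum_pos) auto
  have Z: "Z > 0" unfolding Z_def using A ne w by (intro sum_pos) auto
  have "Z \<le> S powr \<rho> * n powr (1 - \<rho>)"
    unfolding Z_def S_def n_def using sum_powr_le_card_powr[OF A ne a \<rho>(1,2)] w_eq by simp
  hence "ln Z \<le> ln (S powr \<rho> * n powr (1 - \<rho>))" using Z by simp
  also have "\<dots> = \<rho> * ln S + (1 - \<rho>) * ln n" using S n by (simp add: ln_mult)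
  finally have lnZ: "ln Z \<le> \<rho> * ln S + (1 - \<rho>) * ln n" .
  have lnS: "ln S \<le> - \<eta>' * m + \<eta>'\<^sup>2 / 8"
    unfolding S_def a_def m_def using hoeffding_finite[OF A _ p_sum loss \<eta>'] p by (simp add: less_imp_le)
  have "ln (n * (w k / Z)) = ln n + \<rho> * ln (p k) - \<eta> * loss k - ln Z"
    using n w[OF k] Z p[OF k] by (simp add: w_def ln_mult ln_div \<rho>_def)
  also have "\<dots> \<ge> \<rho> * ln (n * p k) - \<eta> * loss k + \<eta> * m - \<eta> * \<eta>' / 8"
  proof -
    have "\<rho> * ln S \<le> \<rho> * (- \<eta>' * m + \<eta>'\<^sup>2 / 8)" using lnS \<rho> by simp
    also have "\<dots> = - \<eta> * m + \<eta> * \<eta>' / 8" using \<rho>(3) by (simp add: algebra_simps power2_eq_square)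
    finally show ?thesis using lnZ n p[OF k] by (simp add: ln_mult algebra_simps)
  qed
  finally have "\<eta> * (m - loss k) \<le> ln (n * (w k / Z)) - \<rho> * ln (n * p k) + \<eta> * \<eta>' / 8"
    by (simp add: algebra_simps)
  hence "m - loss k \<le> (ln (n * (w k / Z)) - \<rho> * ln (n * p k) + \<eta> * \<eta>' / 8) / \<eta>"
    using \<eta> by (simp add: le_divide_eq mult.commute)
  also have "\<dots> = ln (n * (w k / Z)) / \<eta> - ln (n * p k) / \<eta>' + \<eta>' / 8"
    using \<eta> \<eta>' by (simp add: \<rho>_def diff_divide_distrib add_divide_distrib)
  finally show ?thesis by (simp add: m_def n_def Z_def)
qed

lemma ln_ratio_antimono:
  fixes c :: real and n :: nat
  assumes c: "c \<ge> 1" and n: "n \<ge> 3"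
  shows "ln (c * real (Suc n)) / real (Suc n) \<le> ln (c * real n) / real n"
proof -
  have n0: "real n > 0" using n by simp
  have "c * real n \<ge> 1 * 3" using c n by (intro mult_mono) auto
  hence "ln (c * real n) \<ge> ln 3" by simp
  moreover have "ln (3::real) \<ge> 1" using exp_le by (subst ln_ge_iff) auto
  ultimately have ln_ge_1: "ln (c * real n) \<ge> 1" by simp
  have "ln (c * real (Suc n)) = ln (c * real n) + ln (1 + 1 / real n)"
    using c n0 by (simp add: ln_mult_pos[symmetric] field_simps add_pos_pos)
  also have "ln (1 + 1 / real n) \<le> 1 / real n" using n0 by (intro ln_add_one_self_le_self) simp
  finally have "real n * ln (c * real (Suc n)) \<le> real n * ln (c * real n) + 1"
    using n0 by (simp add: field_simps)
  also have "\<dots> \<le> real (Suc n) * ln (c * real n)" using ln_ge_1 by (simp add: algebra_simps)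
  finally show ?thesis using n0 by (simp add: divide_le_eq le_divide_eq mult.commute)
qed

lemma div_sqrt_ratio: "x > 0 \<Longrightarrow> a > 0 \<Longrightarrow> x / sqrt (x / a) = sqrt (a * x)"
  by (simp add: real_sqrt_divide real_sqrt_mult field_simps)

(* 1/sqrt x <= 2 (sqrt x - sqrt(x-1)): the telescoping bound behind sum 1/sqrt t <= 2 sqrt T. *)
lemma inverse_sqrt_le_diff:
  fixes x :: real
  assumes "x \<ge> 1"
  shows "1 / sqrt x \<le> 2 * sqrt x - 2 * sqrt (x - 1)"
proof -
  define a where "a = sqrt x"
  define b where "b = sqrt (x - 1)"
  have a: "a > 0" "a * a = x" using assms by (simp_all add: a_def)
  have b: "b * b = x - 1" using assms by (simp add: b_def)
  have "2 * a * b \<le> a * a + b * b" using sum_squares_bound[of a b] by (simp add: power2_eq_square)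
  hence "1 \<le> a * (2 * a - 2 * b)" using a b by (simp add: algebra_simps)
  hence "1 / a \<le> 2 * a - 2 * b" using a by (simp add: divide_le_eq mult.commute)
  thus ?thesis by (simp add: a_def b_def)
qed

lemma sqrt_budget:
  fixes T :: nat and L :: real
  assumes T: "T \<ge> 3" and L: "L \<ge> 0"
  shows "sqrt (real T * L) + sqrt L * (1 + 2 * sqrt (real T - 1)) / 8 \<le> sqrt (2 * real T * L)"
proof -
  define a where "a = sqrt (real T)"
  have "sqrt ((17 / 10)\<^sup>2) \<le> a" unfolding a_def using T by (intro real_sqrt_le_mono) (simp add: power2_eq_square)
  hence a: "a \<ge> 17 / 10" by simp
  have "sqrt ((141 / 100)\<^sup>2) \<le> sqrt (2::real)" by (intro real_sqrt_le_mono) (simp add: power2_eq_square)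
  hence "sqrt 2 * a \<ge> (141 / 100) * a" using a by (intro mult_right_mono) auto
  moreover have "a + (1 + 2 * a) / 8 = 5 / 4 * a + 1 / 8" by (simp add: field_simps)
  ultimately have key: "a + (1 + 2 * a) / 8 \<le> sqrt 2 * a" using a by linarith
  have "sqrt (real T - 1) \<le> a" unfolding a_def by (intro real_sqrt_le_mono) simp
  hence "sqrt (real T * L) + sqrt L * (1 + 2 * sqrt (real T - 1)) / 8 \<le> sqrt L * (a + (1 + 2 * a) / 8)"
    using L by (simp add: a_def real_sqrt_mult algebra_simps mult_left_mono)
  also have "\<dots> \<le> sqrt L * (sqrt 2 * a)" using key L by (intro mult_left_mono) auto
  also have "\<dots> = sqrt (2 * real T * L)" by (simp add: a_def real_sqrt_mult)
  finally show ?thesis .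
qed

lemma le_INF_prob_simplex:
  fixes L :: "nat \<Rightarrow> real" and c :: real
  assumes d: "d \<ge> 1" and c: "\<And>k. k < d \<Longrightarrow> c \<le> L k"
  shows "c \<le> (INF q\<in>prob_simplex d. \<Sum>j<d. q j * L j)"
proof (rule cINF_greatest)
  show "prob_simplex d \<noteq> {}"
    using d by (auto simp: prob_simplex_def intro!: exI[of _ "\<lambda>_. 1 / real d"])
next
  fix q assume "q \<in> prob_simplex d"
  hence q: "\<And>j. j < d \<Longrightarrow> q j \<ge> 0" and q_sum: "(\<Sum>j<d. q j) = 1"
    by (auto simp: prob_simplex_def)
  have "c = (\<Sum>j<d. q j * c)" using q_sum by (simp flip: sum_distrib_right)
  also have "\<dots> \<le> (\<Sum>j<d. q j * L j)" using q c by (intro sum_mono mult_left_mono) auto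
  finally show "c \<le> (\<Sum>j<d. q j * L j)" .
qed

context
  fixes d :: nat and l :: "nat \<Rightarrow> nat \<Rightarrow> real"
  assumes d: "d \<ge> 1"
begin

abbreviation \<eta> :: "nat \<Rightarrow> real" where "\<eta> \<equiv> eta_thm d"
abbreviation phat :: "nat \<Rightarrow> nat \<Rightarrow> real" where "phat \<equiv> fixed_share d (eta_thm d) alpha_thm l"

lemma eta_pos: "\<eta> t > 0"
proof -
  have "real d * real t > 1" if "t > 3"
  proof -
    have "real d * real t \<ge> 1 * real t" using d by (intro mult_right_mono) auto
    moreover have "real t > 1" using that by simp
    ultimately show ?thesis by linarith
  qed
  moreover have "real d * 3 > 1" using d by simp
  ultimately show ?thesis by (auto simp: eta_thm_def)
qed

lemma eta_max_form: "\<eta> t = sqrt (ln (real d * real (max t 3)) / real (max t 3))"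
  by (cases "t \<le> 3") (auto simp: eta_thm_def max_def)

lemma eta_antimono: "t \<ge> 1 \<Longrightarrow> \<eta> t \<le> \<eta> (t - 1)"
proof (cases "t \<le> 3")
  case False
  then obtain n where n: "t = Suc n" "n \<ge> 3" by (cases t) auto
  have "ln (real d * real (Suc n)) / real (Suc n) \<le> ln (real d * real n) / real n"
    using ln_ratio_antimono[of "real d" n] d n(2) by simp
  thus ?thesis using n eta_max_form[of n] eta_max_form[of "Suc n"] by (simp add: real_sqrt_le_mono)
qed (auto simp: eta_thm_def)

lemma ln_d_mult_nonneg: "n \<ge> 1 \<Longrightarrow> ln (real d * real n) \<ge> 0"
  using mult_mono[of 1 "real d" 1 "real n"] d by simp

lemma div_eta_le:
  assumes "x \<le> ln (real d * real (max t 3))"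
  shows "x / \<eta> t \<le> sqrt (real (max t 3) * ln (real d * real (max t 3)))"
proof -
  define m where "m = real (max t 3)"
  have "real d * m \<ge> 1 * 3" using d by (intro mult_mono) (auto simp: m_def)
  hence L: "ln (real d * m) > 0" by simp
  have m: "m > 0" by (simp add: m_def)
  have "x / \<eta> t \<le> ln (real d * m) / \<eta> t"
    using assms eta_pos[of t] by (simp add: m_def divide_right_mono)
  also have "\<dots> = sqrt (m * ln (real d * m))"
    using div_sqrt_ratio[OF L m] by (simp add: eta_max_form flip: m_def)
  finally show ?thesis by (simp add: m_def)
qed

lemma final_potential_le:
  assumes "1 \<le> s" "s \<le> T" "T \<ge> 3"
  shows "(ln (real d) + ln (real s)) / \<eta> s \<le> sqrt (real T * ln (real d * real T))"
proof -
  define m where "m = max s 3"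
  have m: "s \<le> m" "3 \<le> m" "m \<le> T" using assms by (auto simp: m_def)
  have "ln (real d) + ln (real s) = ln (real d * real s)" using d assms by (simp add: ln_mult_pos)
  also have "\<dots> \<le> ln (real d * real m)" using d m assms by (intro ln_mono mult_left_mono) auto
  finally have "(ln (real d) + ln (real s)) / \<eta> s \<le> sqrt (real m * ln (real d * real m))"
    using div_eta_le m_def by blast
  also have "\<dots> \<le> sqrt (real T * ln (real d * real T))"
    using d m ln_d_mult_nonneg[of m] by (intro real_sqrt_le_mono mult_mono ln_mono) auto
  finally show ?thesis .
qed

lemma initial_potential_le: "ln (real d) / \<eta> 1 \<le> sqrt (3 * ln (3 * real d))"
  using div_eta_le[of "ln (real d)" 1] d by (simp add: mult.commute)

lemma eta_le_sqrt:
  assumes "n < T" "T \<ge> 3"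
  shows "\<eta> n \<le> sqrt (ln (real d * real T) / real (max n 1))"
proof -
  define m where "m = max n 3"
  have m: "3 \<le> m" "m \<le> T" "max n 1 \<le> m" using assms by (auto simp: m_def)
  have "ln (real d * real m) \<le> ln (real d * real T)" using d m by (intro ln_mono mult_left_mono) auto
  moreover have "ln (real d * real m) \<ge> 0" using ln_d_mult_nonneg[of m] m by simp
  ultimately have "ln (real d * real m) / real m \<le> ln (real d * real T) / real (max n 1)"
    using m by (intro frac_le) auto
  thus ?thesis by (simp add: eta_max_form real_sqrt_le_mono flip: m_def)
qed

lemma sum_eta_le:
  assumes T: "T \<ge> 3"
  shows "1 \<le> n \<Longrightarrow> n \<le> T \<Longrightarrow> (\<Sum>t=1..n. \<eta> (t - 1)) \<le> sqrt (ln (real d * real T)) * (1 + 2 * sqrt (real n - 1))"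
proof (induction n rule: nat_induct_at_least)
  case base
  then show ?case using eta_le_sqrt[of 0] T by simp
next
  case (Suc n)
  have "\<eta> n \<le> sqrt (ln (real d * real T)) * (1 / sqrt (real n))"
    using eta_le_sqrt[of n] Suc T by (simp add: real_sqrt_divide)
  also have "\<dots> \<le> sqrt (ln (real d * real T)) * (2 * sqrt (real n) - 2 * sqrt (real n - 1))"
    using inverse_sqrt_le_diff[of "real n"] Suc.hyps ln_d_mult_nonneg[of T] T by (intro mult_left_mono) auto
  finally show ?case using Suc by (simp add: algebra_simps)
qed

definition weight :: "nat \<Rightarrow> nat \<Rightarrow> real" where
  "weight t j = phat t j powr (\<eta> t / \<eta> (t - 1)) * exp (- \<eta> t * l t j)"

lemma phat_step:
  "t \<ge> 1 \<Longrightarrow> phat (Suc t) j = alpha_thm t / real d + (1 - alpha_thm t) * (weight t j / (\<Sum>i<d. weight t i))"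
  by (cases t) (auto simp: weight_def Let_def)

(* Since alpha_1 = 1 the second prediction is again uniform. *)
lemma phat_two: "phat 2 j = 1 / real d"
  using phat_step[of 1 j] by (simp add: alpha_thm_def numeral_2_eq_2)

lemma weight_pos: "phat t j > 0 \<Longrightarrow> weight t j > 0"
  by (simp add: weight_def)

lemma weight_sum_pos: "(\<And>j. j < d \<Longrightarrow> phat t j > 0) \<Longrightarrow> (\<Sum>i<d. weight t i) > 0"
  using d weight_pos by (intro sum_pos) (auto simp: lessThan_empty_iff)

lemma phat_distribution: "t \<ge> 1 \<Longrightarrow> (\<forall>j<d. phat t j > 0) \<and> (\<Sum>j<d. phat t j) = 1"
proof (induction t rule: nat_induct_at_least)
  case base
  then show ?case using d by simp
next
  case (Suc t)
  define Z where "Z = (\<Sum>i<d. weight t i)"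
  have weight: "\<And>j. j < d \<Longrightarrow> weight t j > 0" and Z: "Z > 0"
    using weight_pos weight_sum_pos Suc.IH by (auto simp: Z_def)
  have \<alpha>: "0 < alpha_thm t" "alpha_thm t \<le> 1" using Suc.hyps by (auto simp: alpha_thm_def)
  have "phat (Suc t) j > 0" if "j < d" for j
    unfolding phat_step[OF Suc.hyps] using \<alpha> weight[OF that] Z d
    by (intro add_pos_nonneg mult_nonneg_nonneg divide_nonneg_pos) (auto simp: Z_def)
  moreover have "(\<Sum>j<d. phat (Suc t) j) = alpha_thm t + (1 - alpha_thm t) * ((\<Sum>j<d. weight t j) / Z)"
    using d by (simp add: phat_step[OF Suc.hyps] sum.distrib flip: Z_def sum_distrib_left sum_divide_distrib)
  ultimately show ?case using Z by (simp add: Z_def)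
qed

lemma phat_le_one: "t \<ge> 1 \<Longrightarrow> j < d \<Longrightarrow> phat t j \<le> 1"
  using phat_distribution[of t] member_le_sum[of j "{..<d}" "phat t"] by (auto simp: less_imp_le)

(* The mixing with alpha_{t-1} = 1/(t-1) keeps every weight above 1/(d(t-1)). *)
lemma phat_lower: "t \<ge> 2 \<Longrightarrow> k < d \<Longrightarrow> 1 / (real d * (real t - 1)) \<le> phat t k"
proof -
  assume t: "t \<ge> 2" and k: "k < d"
  obtain n where n: "t = Suc n" "n \<ge> 1" using t by (cases t) auto
  have "(1 - alpha_thm n) * (weight n k / (\<Sum>i<d. weight n i)) \<ge> 0"
    using phat_distribution[OF n(2)] weight_pos[of n k] weight_sum_pos[of n] k n(2)
    by (intro mult_nonneg_nonneg divide_nonneg_pos) (auto simp: alpha_thm_def)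
  hence "phat t k \<ge> alpha_thm n / real d" unfolding n(1) phat_step[OF n(2)] by simp
  thus ?thesis using n by (simp add: alpha_thm_def mult.commute)
qed

(* Logarithmic cost of the mixing step of round t: replacing the posterior v by
   p_{t+1} >= (1 - 1/t) v costs ln(t/(t-1)); in round 1 (alpha_1 = 1) it costs ln d. *)
definition share_cost :: "nat \<Rightarrow> real" where
  "share_cost t = (if t = 1 then ln (real d) else ln (real t) - ln (real t - 1))"

lemma posterior_le_shared:
  assumes t: "t \<ge> 1" and k: "k < d"
  shows "ln (real d * (weight t k / (\<Sum>i<d. weight t i))) \<le> ln (real d * phat (Suc t) k) + share_cost t"
proof -
  define v where "v = weight t k / (\<Sum>i<d. weight t i)"
  have weight: "\<And>j. j < d \<Longrightarrow> weight t j > 0" and Z: "(\<Sum>i<d. weight t i) > 0"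
    using phat_distribution[OF t] weight_pos weight_sum_pos by auto
  have v: "v > 0" using weight[OF k] Z by (simp add: v_def)
  have "weight t k \<le> (\<Sum>i<d. weight t i)" using weight k by (intro member_le_sum) (auto simp: less_imp_le)
  hence v1: "v \<le> 1" using Z by (simp add: v_def)
  have dpos: "real d > 0" using d by simp
  show ?thesis
  proof (cases "t = 1")
    case True
    have "phat (Suc t) k = 1 / real d" using phat_two[of k] True by (simp add: eval_nat_numeral)
    hence "ln (real d * phat (Suc t) k) = 0" using dpos by simp
    moreover have "ln (real d * v) \<le> ln (real d)" using dpos v v1 by (simp add: ln_mult_pos)
    ultimately show ?thesis using True by (simp add: v_def share_cost_def)
  next
    case False
    hence t2: "real t - 1 > 0" using t by simp
    have "(real t - 1) / real t * v = (1 - alpha_thm t) * v"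
      using t by (simp add: alpha_thm_def field_simps)
    also have "\<dots> \<le> phat (Suc t) k"
      unfolding phat_step[OF t] v_def by (simp add: alpha_thm_def)
    finally have "real d * ((real t - 1) / real t * v) \<le> real d * phat (Suc t) k"
      using dpos by (intro mult_left_mono) auto
    hence "ln (real d * ((real t - 1) / real t * v)) \<le> ln (real d * phat (Suc t) k)"
      using dpos t2 v t by (intro ln_mono) auto
    moreover have "ln (real d * ((real t - 1) / real t * v)) = ln (real d * v) + ln (real t - 1) - ln (real t)"
      using dpos t2 v t by (simp add: ln_mult_pos ln_div)
    ultimately show ?thesis using False by (simp add: v_def share_cost_def)
  qed
qed

definition potential :: "nat \<Rightarrow> nat \<Rightarrow> real" where
  "potential k t = ln (real d * phat t k) / \<eta> (t - 1)"

lemma round_step: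
  assumes t: "t \<ge> 1" and k: "k < d" and loss: "\<And>j. j < d \<Longrightarrow> 0 \<le> l t j \<and> l t j \<le> 1"
  shows "(\<Sum>j<d. phat t j * l t j) - l t k
         \<le> potential k (Suc t) - potential k t + share_cost t / \<eta> t + \<eta> (t - 1) / 8"
proof -
  have "(\<Sum>j<d. phat t j * l t j) - l t k
        \<le> ln (real d * (weight t k / (\<Sum>i<d. weight t i))) / \<eta> t - ln (real d * phat t k) / \<eta> (t - 1) + \<eta> (t - 1) / 8"
    using exp_weights_round[of "{..<d}" k "phat t" "l t" "\<eta> t" "\<eta> (t - 1)"] k loss
      phat_distribution[OF t] eta_pos[of t] eta_antimono[OF t]
    by (simp add: weight_def[abs_def])
  also have "ln (real d * (weight t k / (\<Sum>i<d. weight t i))) / \<eta> t \<le> (ln (real d * phat (Suc t) k) + share_cost t) / \<eta> t"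
    using posterior_le_shared[OF t k] eta_pos[of t] by (simp add: divide_right_mono)
  finally show ?thesis by (simp add: potential_def add_divide_distrib)
qed

(* Bound on minus the potential at the start of an interval, from the floor phat_lower. *)
definition restart_bound :: "nat \<Rightarrow> real" where
  "restart_bound t = (if t \<le> 1 then 0 else ln (real t - 1) / \<eta> (t - 1))"

lemma neg_potential_le: "t \<ge> 1 \<Longrightarrow> k < d \<Longrightarrow> - potential k t \<le> restart_bound t"
proof (cases "t = 1")
  case True
  then show ?thesis using d by (simp add: potential_def restart_bound_def)
next
  case False
  assume t: "t \<ge> 1" and k: "k < d"
  hence t1: "real t - 1 > 0" and t2: "t \<ge> 2" using False by auto
  have "1 / (real t - 1) \<le> real d * phat t k"
    using phat_lower[OF t2 k] d t1 by (simp add: field_simps)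
  hence "ln (1 / (real t - 1)) \<le> ln (real d * phat t k)"
    using t1 by (intro ln_mono) auto
  hence "- ln (real d * phat t k) \<le> ln (real t - 1)" using t1 by (simp add: ln_div)
  hence "- ln (real d * phat t k) / \<eta> (t - 1) \<le> ln (real t - 1) / \<eta> (t - 1)"
    using eta_pos[of "t - 1"] by (intro divide_right_mono) auto
  thus ?thesis using t2 by (simp add: potential_def restart_bound_def)
qed

lemma share_cost_le:
  "t \<ge> 1 \<Longrightarrow> share_cost t / \<eta> t
     \<le> restart_bound (Suc t) - restart_bound t + (if t = 1 then ln (real d) / \<eta> 1 else 0)"
proof (cases "t = 1")
  case False
  assume t: "t \<ge> 1"
  have "ln (real t - 1) \<ge> 0" using t False by simp
  hence "ln (real t - 1) / \<eta> (t - 1) \<le> ln (real t - 1) / \<eta> t"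
    using eta_pos[of t] eta_antimono[OF t] by (intro divide_left_mono) auto
  thus ?thesis using t False by (simp add: share_cost_def restart_bound_def diff_divide_distrib)
qed (simp add: share_cost_def restart_bound_def)

lemma interval_regret_bound:
  assumes r: "1 \<le> r" "r \<le> s" and k: "k < d"
    and loss: "\<And>t j. r \<le> t \<Longrightarrow> t \<le> s \<Longrightarrow> j < d \<Longrightarrow> 0 \<le> l t j \<and> l t j \<le> 1"
  shows "(\<Sum>t=r..s. (\<Sum>j<d. phat t j * l t j) - l t k)
         \<le> (ln (real d) + ln (real s)) / \<eta> s + (if r = 1 then ln (real d) / \<eta> 1 else 0)
           + (\<Sum>t=r..s. \<eta> (t - 1)) / 8"
proof -
  define c where "c = ln (real d) / \<eta> 1"
  have "(\<Sum>t=r..s. (\<Sum>j<d. phat t j * l t j) - l t k)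
        \<le> (\<Sum>t=r..s. (potential k (Suc t) - potential k t) + (restart_bound (Suc t) - restart_bound t)
                      + (if t = 1 then c else 0) + \<eta> (t - 1) / 8)"
  proof (rule sum_mono)
    fix t assume t: "t \<in> {r..s}"
    hence "t \<ge> 1" using r by simp
    thus "(\<Sum>j<d. phat t j * l t j) - l t k
          \<le> (potential k (Suc t) - potential k t) + (restart_bound (Suc t) - restart_bound t)
            + (if t = 1 then c else 0) + \<eta> (t - 1) / 8"
      using round_step[OF _ k, of t] share_cost_le[of t] loss[of t] t unfolding c_def by force
  qed
  also have "\<dots> = (potential k (Suc s) - potential k r) + (restart_bound (Suc s) - restart_bound r)
                   + (if r = 1 then c else 0) + (\<Sum>t=r..s. \<eta> (t - 1)) / 8"
    using r by (simp add: sum.distrib sum_Suc_diff sum_divide_distrib)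
  finally have telescoped: "(\<Sum>t=r..s. (\<Sum>j<d. phat t j * l t j) - l t k)
      \<le> potential k (Suc s) + restart_bound (Suc s) - (potential k r + restart_bound r)
        + (if r = 1 then c else 0) + (\<Sum>t=r..s. \<eta> (t - 1)) / 8" by simp
  have "real d * phat (Suc s) k \<le> real d" using phat_le_one[of "Suc s" k] k by simp
  hence "ln (real d * phat (Suc s) k) \<le> ln (real d)"
    using phat_distribution[of "Suc s"] k d by (intro ln_mono) auto
  hence "potential k (Suc s) \<le> ln (real d) / \<eta> s"
    using eta_pos[of s] by (simp add: potential_def divide_right_mono)
  moreover have "restart_bound (Suc s) = ln (real s) / \<eta> s" using r by (simp add: restart_bound_def)
  moreover have "- potential k r \<le> restart_bound r" using neg_potential_le[OF r(1) k] .
  ultimately show ?thesis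
    using telescoped unfolding c_def[symmetric] add_divide_distrib by linarith
qed

lemma regret_against_expert:
  assumes T: "T \<ge> 3" and r: "1 \<le> r" "r \<le> s" "s \<le> T" and k: "k < d"
    and loss: "\<And>t j. 1 \<le> t \<Longrightarrow> t \<le> T \<Longrightarrow> j < d \<Longrightarrow> 0 \<le> l t j \<and> l t j \<le> 1"
  shows "(\<Sum>t=r..s. (\<Sum>j<d. phat t j * l t j) - l t k)
         \<le> sqrt (2 * real T * ln (real d * real T)) + sqrt (3 * ln (3 * real d))"
proof -
  have "(\<Sum>t=r..s. \<eta> (t - 1)) \<le> (\<Sum>t=1..T. \<eta> (t - 1))"
    using r eta_pos by (intro sum_mono2) (auto simp: less_imp_le)
  also have "\<dots> \<le> sqrt (ln (real d * real T)) * (1 + 2 * sqrt (real T - 1))"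
    using sum_eta_le[OF T, of T] T by simp
  finally have etas: "(\<Sum>t=r..s. \<eta> (t - 1)) / 8 \<le> sqrt (ln (real d * real T)) * (1 + 2 * sqrt (real T - 1)) / 8"
    by simp
  have "ln (real d * real T) \<ge> 0" using ln_d_mult_nonneg[of T] T by simp
  from sqrt_budget[OF T this] have budget:
    "sqrt (real T * ln (real d * real T)) + sqrt (ln (real d * real T)) * (1 + 2 * sqrt (real T - 1)) / 8
     \<le> sqrt (2 * real T * ln (real d * real T))" .
  have initial: "(if r = 1 then ln (real d) / \<eta> 1 else 0) \<le> sqrt (3 * ln (3 * real d))"
    using initial_potential_le d by simp
  have "s \<ge> 1" using r by simp
  from final_potential_le[OF this r(3) T]
  have final: "(ln (real d) + ln (real s)) / \<eta> s \<le> sqrt (real T * ln (real d * real T))" .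
  have "(\<Sum>t=r..s. (\<Sum>j<d. phat t j * l t j) - l t k)
        \<le> (ln (real d) + ln (real s)) / \<eta> s + (if r = 1 then ln (real d) / \<eta> 1 else 0)
          + (\<Sum>t=r..s. \<eta> (t - 1)) / 8"
    using interval_regret_bound[OF r(1,2) k] loss r by simp
  thus ?thesis using initial final etas budget by linarith
qed


lemma regret_against_simplex:
  assumes T: "T \<ge> 3" and r: "1 \<le> r" "r \<le> s" "s \<le> T"
    and loss: "\<And>t j. 1 \<le> t \<Longrightarrow> t \<le> T \<Longrightarrow> j < d \<Longrightarrow> 0 \<le> l t j \<and> l t j \<le> 1"
  shows "(\<Sum>t=r..s. \<Sum>j<d. phat t j * l t j) - (INF q\<in>prob_simplex d. \<Sum>t=r..s. \<Sum>j<d. q j * l t j)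
         \<le> sqrt (2 * real T * ln (real d * real T)) + sqrt (3 * ln (3 * real d))"
proof -
  define B where "B = sqrt (2 * real T * ln (real d * real T)) + sqrt (3 * ln (3 * real d))"
  have "(\<Sum>t=r..s. \<Sum>j<d. phat t j * l t j) - B \<le> (\<Sum>t=r..s. l t k)" if "k < d" for k
    using regret_against_expert[OF T r that loss] unfolding B_def sum_subtractf by linarith
  hence "(\<Sum>t=r..s. \<Sum>j<d. phat t j * l t j) - B
         \<le> (INF q\<in>prob_simplex d. \<Sum>j<d. q j * (\<Sum>t=r..s. l t j))"
    by (rule le_INF_prob_simplex[OF d])
  also have "\<dots> = (INF q\<in>prob_simplex d. \<Sum>t=r..s. \<Sum>j<d. q j * l t j)"
    by (simp add: sum_distrib_left sum.swap[of _ "{r..s}"])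
  finally show ?thesis by (simp add: B_def)
qed

end

theorem mainTheorem14:
  fixes d T :: nat and l :: "nat \<Rightarrow> nat \<Rightarrow> real"
  assumes "d \<ge> 1" and "T \<ge> 3"
    and "\<And>t j. 1 \<le> t \<Longrightarrow> t \<le> T \<Longrightarrow> j < d \<Longrightarrow> 0 \<le> l t j \<and> l t j \<le> 1"
  shows "Max ((\<lambda>(r, s). (\<Sum>t=r..s. \<Sum>j<d. fixed_share d (eta_thm d) alpha_thm l t j * l t j)
               - (INF q\<in>prob_simplex d. \<Sum>t=r..s. \<Sum>j<d. q j * l t j))
             ` {(r, s). 1 \<le> r \<and> r \<le> s \<and> s \<le> T})
         \<le> sqrt (2 * real T * ln (real d * real T)) + sqrt (3 * ln (3 * real d))"
proof -
  define I where "I = {(r, s). 1 \<le> r \<and> r \<le> s \<and> s \<le> T}"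
  have "finite I" unfolding I_def by (rule finite_subset[of _ "{1..T} \<times> {1..T}"]) auto
  moreover have "(1, 1) \<in> I" using assms(2) by (simp add: I_def)
  ultimately show ?thesis
    using regret_against_simplex[OF assms(1,2) _ _ _ assms(3)]
    by (intro Max.boundedI) (auto simp: I_def)
qed

end
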